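(* Let $\mathfrak{u}_s(1,1)=\{T\in M_2(\mathbb{C}): T=T^*,\ T^*I_{1,1}+I_{1,1}T=0\}$ and let $\mathbf{U}_{s+}(1,1)=\{M\in\mathbf{U}_s(1,1):\operatorname{Tr}(M)\geq 2\}$. Then $\exp(\mathfrak{u}_s(1,1))=\mathbf{U}_{s+}(1,1)$, where $\exp$ is the matrix exponential. Moreover, every element of $\exp(\mathfrak{u}_s(1,1))$ is equivalent (under $\sim$) to exactly one element of $G_+=\{M_t:t\geq 0\}$, where $M_t=\begin{pmatrix}\cosh t&\sinh t\\ \sinh t&\cosh t\end{pmatrix}$; i.e. $\exp(\mathfrak{u}_s(1,1))/\!\sim\;=G_+$.
   Context: $I_{1,1}=\mathrm{diag}\{1,-1\}$; $T^*$ is the conjugate transpose. $\mathbf{U}_s(1,1)=\{M\in\mathbf{GL}(2,\mathbb{C}): M=M^*,\ M^*I_{1,1}M=I_{1,1}\}$. The equivalence $\sim$ on $2\times 2$ matrices in $\mathbf{U}(1,1)=\{M: M^*I_{1,1}M=I_{1,1}\}$ is the one defined by: $M_1\sim M_2$ if $M_1=\pm M_2$ or $M_1=Q^*M_2Q$ for some $Q\in\mathbf{U}(1)\oplus\mathbf{U}(1)$ (diagonal matrices with unimodular diagonal entries), taken as the equivalence relation these relations generate. *)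

theory Defs
  imports "HOL-Analysis.Analysis"
begin

type_synonym cmat2 = "complex^2^2"

definition adj :: "cmat2 \<Rightarrow> cmat2" where
  "adj A = (\<chi> i j. cnj (A $ j $ i))"

definition I11 :: cmat2 where
  "I11 = (\<chi> i j. if i = j then (if i = 1 then 1 else -1) else 0)"

primrec mpow :: "cmat2 \<Rightarrow> nat \<Rightarrow> cmat2" where
  "mpow A 0 = mat 1"
| "mpow A (Suc k) = A ** mpow A k"

definition mexp :: "cmat2 \<Rightarrow> cmat2" where
  "mexp T = (\<chi> i j. \<Sum>k. mpow T k $ i $ j / of_nat (fact k))"

definition U11 :: "cmat2 set" where
  "U11 = {M. adj M ** I11 ** M = I11}"

definition Us11 :: "cmat2 set" where
  "Us11 = {M. invertible M \<and> M = adj M \<and> adj M ** I11 ** M = I11}"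

definition us11 :: "cmat2 set" where
  "us11 = {T. T = adj T \<and> adj T ** I11 + I11 ** T = 0}"

definition Usp11 :: "cmat2 set" where
  "Usp11 = {M \<in> Us11. trace M \<in> \<real> \<and> Re (trace M) \<ge> 2}"

definition diagU :: "cmat2 set" where
  "diagU = {Q. \<exists>a b. cmod a = 1 \<and> cmod b = 1 \<and>
                 Q = (\<chi> i j. if i = j then (if i = 1 then a else b) else 0)}"

definition sim_basic :: "cmat2 \<Rightarrow> cmat2 \<Rightarrow> bool" where
  "sim_basic M1 M2 \<longleftrightarrow> M1 \<in> U11 \<and> M2 \<in> U11 \<and>
     (M1 = M2 \<or> M1 = - M2 \<or> (\<exists>Q\<in>diagU. M1 = adj Q ** M2 ** Q))"

definition sim :: "cmat2 \<Rightarrow> cmat2 \<Rightarrow> bool" where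
  "sim = equivclp sim_basic"

definition Mt :: "real \<Rightarrow> cmat2" where
  "Mt t = (\<chi> i j. if i = j then complex_of_real (cosh t) else complex_of_real (sinh t))"

definition Gplus :: "cmat2 set" where
  "Gplus = {Mt t | t. t \<ge> 0}"

end

theory Submission
  imports Defs
begin

(* A matrix in us11 is Hermitian with zero diagonal and off-diagonal entries b, cnj b. Its square
   is |b|^2 times the identity, so the exponential series splits into the cosh and sinh series:
   exp is a "boost" with diagonal cosh |b| and upper right entry sinh |b| * sgn b.  Conversely,
   hermiticity, the U(1,1) relation and trace >= 2 force an element of Usp11 to be a boost with
   diagonal alpha >= 1 and alpha^2 - |c|^2 = 1, and arsinh inverts the parametrisation.
   Conjugation by diag(q, 1) with |q| = 1 rotates the phase of the off-diagonal entry, so every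
   boost is equivalent to M_t with t = arsinh |c|; uniqueness holds because |trace| is invariant
   under the generating relations and trace M_t = 2 cosh t is injective on t >= 0. *)

definition mat2 :: "complex \<Rightarrow> complex \<Rightarrow> complex \<Rightarrow> complex \<Rightarrow> cmat2" where
  "mat2 a b c d = (\<chi> i j. if i = 1 then (if j = 1 then a else b) else (if j = 1 then c else d))"

lemma mat2_nth [simp]:
  "mat2 a b c d $ 1 $ 1 = a" "mat2 a b c d $ 1 $ 2 = b"
  "mat2 a b c d $ 2 $ 1 = c" "mat2 a b c d $ 2 $ 2 = d"
  by (simp_all add: mat2_def)

lemma mat2_cases: obtains a b c d where "A = mat2 a b c d"
proof
  show "A = mat2 (A$1$1) (A$1$2) (A$2$1) (A$2$2)"
    by (simp add: vec_eq_iff forall_2)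
qed

lemma mat2_eq_iff [simp]:
  "mat2 a b c d = mat2 a' b' c' d' \<longleftrightarrow> a = a' \<and> b = b' \<and> c = c' \<and> d = d'"
  by (auto simp: vec_eq_iff forall_2)

lemma mat2_mult [simp]:
  "mat2 a b c d ** mat2 e f g h = mat2 (a*e + b*g) (a*f + b*h) (c*e + d*g) (c*f + d*h)"
  by (simp add: vec_eq_iff forall_2 matrix_matrix_mult_def sum_2)

lemma mat2_add [simp]: "mat2 a b c d + mat2 e f g h = mat2 (a+e) (b+f) (c+g) (d+h)"
  by (simp add: vec_eq_iff forall_2)

lemma adj_mat2 [simp]: "adj (mat2 a b c d) = mat2 (cnj a) (cnj c) (cnj b) (cnj d)"
  by (simp add: vec_eq_iff forall_2 adj_def)

lemma trace_mat2 [simp]: "trace (mat2 a b c d) = a + d"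
  by (simp add: trace_def sum_2)

lemma det_mat2 [simp]: "det (mat2 a b c d) = a * d - b * c"
  by (simp add: det_2)

lemma I11_eq_mat2: "I11 = mat2 1 0 0 (-1)"
  by (simp add: vec_eq_iff forall_2 I11_def)

lemma mat1_eq_mat2: "mat 1 = mat2 1 0 0 1"
  by (simp add: vec_eq_iff forall_2 mat_def)

lemma zero_eq_mat2: "0 = mat2 0 0 0 0"
  by (simp add: vec_eq_iff forall_2)

lemma complex_norm_mult_sgn: "of_real (cmod z) * sgn z = z"
  by (cases "z = 0") (simp_all add: sgn_eq)

lemma complex_mult_cnj_sgn: "z * cnj (sgn z) = of_real (cmod z)"
  by (cases "z = 0") (simp_all add: sgn_eq complex_norm_square[symmetric] power2_eq_square)

lemma complex_cnj_mult_sgn: "cnj z * sgn z = of_real (cmod z)"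
  using complex_mult_cnj_sgn[of z] by (metis complex_cnj_cnj complex_cnj_complex_of_real complex_cnj_mult)

lemma norm_of_real_mult_sgn:
  fixes x :: real and z :: complex
  shows "cmod (of_real x * sgn z) = (if z = 0 then 0 else \<bar>x\<bar>)"
  by (simp add: norm_mult norm_sgn)

lemma sgn_of_real_mult_sgn:
  fixes x :: real and z :: complex
  shows "0 < x \<Longrightarrow> sgn (of_real x * sgn z) = sgn z"
  by (simp add: sgn_mult sgn_of_real)

definition herm_offdiag :: "complex \<Rightarrow> cmat2" where
  "herm_offdiag b = mat2 0 b (cnj b) 0"

lemma mat2_in_us11_iff: "mat2 a b c d \<in> us11 \<longleftrightarrow> a = 0 \<and> d = 0 \<and> c = cnj b"
  by (simp add: us11_def I11_eq_mat2 zero_eq_mat2 complex_eq_iff) auto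

lemma us11_eq_range_herm_offdiag: "us11 = range herm_offdiag"
proof (intro set_eqI)
  fix T :: cmat2
  obtain a b c d where "T = mat2 a b c d" by (rule mat2_cases)
  then show "T \<in> us11 \<longleftrightarrow> T \<in> range herm_offdiag"
    by (auto simp: mat2_in_us11_iff herm_offdiag_def)
qed

definition boost :: "real \<Rightarrow> complex \<Rightarrow> cmat2" where
  "boost \<alpha> c = mat2 (of_real \<alpha>) c (cnj c) (of_real \<alpha>)"

lemma Mt_eq_boost: "Mt t = boost (cosh t) (sinh t)"
  by (simp add: vec_eq_iff forall_2 Mt_def boost_def)

lemma trace_boost: "trace (boost \<alpha> c) = of_real (2 * \<alpha>)"
  by (simp add: boost_def)

lemma adj_boost: "adj (boost \<alpha> c) = boost \<alpha> c"
  by (simp add: boost_def)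

lemma det_boost: "det (boost \<alpha> c) = of_real (\<alpha>\<^sup>2 - (cmod c)\<^sup>2)"
  by (simp add: boost_def complex_norm_square[symmetric] power2_eq_square)

lemma boost_in_U11: "det (boost \<alpha> c) = 1 \<Longrightarrow> boost \<alpha> c \<in> U11"
  by (simp add: U11_def boost_def I11_eq_mat2 algebra_simps)

lemma boost_in_Usp11:
  assumes "1 \<le> \<alpha>" and "\<alpha>\<^sup>2 = 1 + (cmod c)\<^sup>2"
  shows "boost \<alpha> c \<in> Usp11"
proof -
  from assms(2) have "det (boost \<alpha> c) = 1" by (simp add: det_boost)
  with assms(1) show ?thesis
    using boost_in_U11 by (simp add: Usp11_def Us11_def U11_def adj_boost invertible_det_nz trace_boost)
qed

lemma hermitian_cases:
  assumes "M = adj M"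
  obtains \<alpha> \<delta> :: real and q where "M = mat2 (of_real \<alpha>) q (cnj q) (of_real \<delta>)"
proof -
  obtain p q u v where M: "M = mat2 p q u v" by (rule mat2_cases)
  have "p = cnj p \<and> q = cnj u \<and> u = cnj q \<and> v = cnj v"
    using assms unfolding M adj_mat2 mat2_eq_iff .
  then have "M = mat2 (of_real (Re p)) q (cnj q) (of_real (Re v))"
    by (metis M Reals_cnj_iff of_real_Re)
  then show ?thesis by (rule that)
qed

lemma Usp11_cases:
  assumes "M \<in> Usp11"
  obtains \<alpha> c where "M = boost \<alpha> c" "1 \<le> \<alpha>" "\<alpha>\<^sup>2 = 1 + (cmod c)\<^sup>2"
proof -
  have herm: "M = adj M" and isom: "adj M ** I11 ** M = I11" and tr: "2 \<le> Re (trace M)"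
    using assms by (auto simp: Usp11_def Us11_def)
  obtain \<alpha> \<delta> :: real and q where M: "M = mat2 (of_real \<alpha>) q (cnj q) (of_real \<delta>)"
    using herm by (rule hermitian_cases)
  have "of_real (\<alpha>\<^sup>2) - q * cnj q = 1" "q * of_real (\<alpha> - \<delta>) = 0" "of_real (\<delta>\<^sup>2) - q * cnj q = 1"
    using isom by (simp_all add: M I11_eq_mat2 algebra_simps power2_eq_square)
  then have "q * of_real (\<alpha> - \<delta>) = 0" and \<alpha>: "\<alpha>\<^sup>2 = 1 + (cmod q)\<^sup>2" and \<delta>: "\<delta>\<^sup>2 = 1 + (cmod q)\<^sup>2"
    unfolding complex_norm_square[symmetric] of_real_power[symmetric] of_real_diff[symmetric] of_real_eq_1_iff
    by simp_all
  have "\<alpha> = \<delta>"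
  proof (cases "q = 0")
    case True
    with \<alpha> \<delta> tr show ?thesis by (auto simp: M power2_eq_1_iff)
  next
    case False
    with \<open>q * of_real (\<alpha> - \<delta>) = 0\<close> show ?thesis by simp
  qed
  with tr have "M = boost \<alpha> q" "1 \<le> \<alpha>"
    by (simp_all add: M boost_def)
  with \<alpha> show ?thesis using that by blast
qed

lemma mpow_herm_offdiag:
  "mpow (herm_offdiag b) k =
     (if even k then mat2 (of_real (cmod b ^ k)) 0 0 (of_real (cmod b ^ k))
      else mat2 0 (of_real (cmod b ^ k) * sgn b) (of_real (cmod b ^ k) * cnj (sgn b)) 0)"
proof (induction k)
  case 0
  show ?case by (simp add: mat1_eq_mat2)
next
  case (Suc k)
  have "b = of_real (cmod b) * sgn b" "cnj b = of_real (cmod b) * cnj (sgn b)"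
    using complex_norm_mult_sgn[of b] by (metis, metis complex_cnj_complex_of_real complex_cnj_mult)
  moreover have "b \<noteq> 0 \<Longrightarrow> sgn b * cnj (sgn b) = 1"
    by (simp add: complex_norm_square[symmetric] norm_sgn)
  ultimately show ?case
    using Suc by (auto simp: herm_offdiag_def complex_mult_cnj_sgn complex_cnj_mult_sgn algebra_simps)
qed

lemma mexp_herm_offdiag:
  "mexp (herm_offdiag b) = boost (cosh (cmod b)) (of_real (sinh (cmod b)) * sgn b)"
proof -
  let ?r = "cmod b"
  let ?a = "\<lambda>i j k. mpow (herm_offdiag b) k $ i $ j / of_nat (fact k)"
  have cosh: "(\<lambda>k. of_real (if even k then ?r ^ k /\<^sub>R fact k else 0)) sums complex_of_real (cosh ?r)"
    unfolding sums_of_real_iff by (rule cosh_converges)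
  have sinh: "(\<lambda>k. of_real (if even k then 0 else ?r ^ k /\<^sub>R fact k) * z) sums (of_real (sinh ?r) * z)"
    for z :: complex
    by (rule sums_mult2) (unfold sums_of_real_iff, rule sinh_converges)
  have "?a 1 1 = (\<lambda>k. of_real (if even k then ?r ^ k /\<^sub>R fact k else 0))"
       "?a 2 2 = (\<lambda>k. of_real (if even k then ?r ^ k /\<^sub>R fact k else 0))"
       "?a 1 2 = (\<lambda>k. of_real (if even k then 0 else ?r ^ k /\<^sub>R fact k) * sgn b)"
       "?a 2 1 = (\<lambda>k. of_real (if even k then 0 else ?r ^ k /\<^sub>R fact k) * cnj (sgn b))"
    by (auto simp: mpow_herm_offdiag divide_inverse scaleR_conv_of_real)
  with cosh sinh have "(\<Sum>k. ?a 1 1 k) = of_real (cosh ?r)" "(\<Sum>k. ?a 2 2 k) = of_real (cosh ?r)"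
    "(\<Sum>k. ?a 1 2 k) = of_real (sinh ?r) * sgn b" "(\<Sum>k. ?a 2 1 k) = of_real (sinh ?r) * cnj (sgn b)"
    by (simp_all add: sums_unique[symmetric])
  then show ?thesis
    by (simp add: vec_eq_iff forall_2 mexp_def boost_def)
qed

lemma norm_sinh_norm_mult_sgn: "cmod (of_real (sinh (cmod b)) * sgn b) = sinh (cmod b)"
  by (simp add: norm_of_real_mult_sgn)

lemma mexp_herm_offdiag_in_Usp11: "mexp (herm_offdiag b) \<in> Usp11"
  unfolding mexp_herm_offdiag
  by (intro boost_in_Usp11) (simp_all add: norm_sinh_norm_mult_sgn cosh_real_ge_1 cosh_square_eq)

lemma boost_eq_mexp_herm_offdiag:
  assumes "1 \<le> \<alpha>" and "\<alpha>\<^sup>2 = 1 + (cmod c)\<^sup>2"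
  shows "boost \<alpha> c = mexp (herm_offdiag (of_real (arsinh (cmod c)) * sgn c))"
proof (cases "c = 0")
  case True
  with assms have "\<alpha> = 1" by (simp add: power2_eq_1_iff)
  with True show ?thesis by (simp add: mexp_herm_offdiag)
next
  case False
  let ?b = "of_real (arsinh (cmod c)) * sgn c"
  from False have "0 < arsinh (cmod c)" by simp
  with False have "cmod ?b = arsinh (cmod c)" "sgn ?b = sgn c"
    by (simp_all add: norm_of_real_mult_sgn sgn_of_real_mult_sgn abs_of_pos)
  moreover have "cosh (arsinh (cmod c)) = \<alpha>"
    using assms by (simp add: cosh_arsinh_real real_sqrt_unique add.commute)
  ultimately show ?thesis
    by (simp add: mexp_herm_offdiag complex_norm_mult_sgn)
qed

theorem mexp_us11_eq_Usp11: "mexp ` us11 = Usp11"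
proof
  show "mexp ` us11 \<subseteq> Usp11"
    by (auto simp: us11_eq_range_herm_offdiag mexp_herm_offdiag_in_Usp11)
  show "Usp11 \<subseteq> mexp ` us11"
  proof
    fix M assume "M \<in> Usp11"
    then obtain \<alpha> c where "M = boost \<alpha> c" "1 \<le> \<alpha>" "\<alpha>\<^sup>2 = 1 + (cmod c)\<^sup>2"
      by (rule Usp11_cases)
    then show "M \<in> mexp ` us11"
      by (auto simp: us11_eq_range_herm_offdiag boost_eq_mexp_herm_offdiag)
  qed
qed

lemma diag_in_diagU: "cmod q = 1 \<Longrightarrow> mat2 q 0 0 1 \<in> diagU"
  unfolding diagU_def by (intro CollectI exI[of _ q] exI[of _ 1]) (simp add: vec_eq_iff forall_2)

lemma diagU_cases:
  assumes "Q \<in> diagU"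
  obtains a d where "Q = mat2 a 0 0 d" "cmod a = 1" "cmod d = 1"
  using assms by (auto simp: diagU_def vec_eq_iff forall_2)

lemma boost_diag_conj:
  assumes "cmod q = 1"
  shows "adj (mat2 q 0 0 1) ** boost \<alpha> c ** mat2 q 0 0 1 = boost \<alpha> (cnj q * c)"
proof -
  have "cnj q * q = 1"
    using assms by (simp add: mult.commute complex_norm_square[symmetric])
  then show ?thesis
    by (simp add: boost_def mult.commute mult.left_commute)
qed

lemma trace_diagU_conj: "Q \<in> diagU \<Longrightarrow> trace (adj Q ** N ** Q) = trace N"
proof -
  assume "Q \<in> diagU"
  then obtain a d where Q: "Q = mat2 a 0 0 d" "cmod a = 1" "cmod d = 1"
    by (rule diagU_cases)
  then have "cnj a * a = 1" "cnj d * d = 1"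
    by (simp_all add: mult.commute complex_norm_square[symmetric])
  then have unit: "cnj a * x * a = x" "cnj d * x * d = x" for x
    by (metis mult.commute mult.left_commute mult_1_right)+
  obtain p q u v where N: "N = mat2 p q u v" by (rule mat2_cases)
  have "trace (adj Q ** N ** Q) = cnj a * p * a + cnj d * v * d"
    by (simp add: Q N)
  also have "\<dots> = trace N"
    by (simp only: unit N trace_mat2)
  finally show ?thesis .
qed

lemma sim_imp_norm_trace_eq: "sim M N \<Longrightarrow> cmod (trace M) = cmod (trace N)"
  unfolding sim_def
proof (induction rule: equivclp_induct)
  case (step N N')
  have "cmod (trace A) = cmod (trace B)" if "sim_basic A B" for A B
    using that trace_diagU_conj[of _ B] by (auto simp: sim_basic_def trace_def sum_negf)
  with step show ?case by metis
qed simp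

lemma sim_boost_norm:
  assumes "\<alpha>\<^sup>2 = 1 + (cmod c)\<^sup>2"
  shows "sim (boost \<alpha> c) (boost \<alpha> (cmod c))"
proof (cases "c = 0")
  case True
  then show ?thesis by (simp add: sim_def)
next
  case False
  let ?q = "cnj (sgn c)"
  have q: "cmod ?q = 1" using False by (simp add: norm_sgn)
  have "det (boost \<alpha> c) = 1" "det (boost \<alpha> (cmod c)) = 1"
    using assms by (simp_all add: det_boost)
  then have "boost \<alpha> c \<in> U11" "boost \<alpha> (cmod c) \<in> U11"
    by (simp_all add: boost_in_U11)
  moreover have "adj (mat2 ?q 0 0 1) ** boost \<alpha> (cmod c) ** mat2 ?q 0 0 1 = boost \<alpha> c"
    unfolding boost_diag_conj[OF q] by (metis complex_cnj_cnj complex_norm_mult_sgn mult.commute)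
  ultimately have "sim_basic (boost \<alpha> c) (boost \<alpha> (cmod c))"
    using q diag_in_diagU unfolding sim_basic_def by metis
  then show ?thesis by (simp add: sim_def r_into_equivclp)
qed

lemma Mt_in_Gplus: "0 \<le> t \<Longrightarrow> Mt t \<in> Gplus"
  by (auto simp: Gplus_def)

lemma Gplus_sim_eq: "N \<in> Gplus \<Longrightarrow> N' \<in> Gplus \<Longrightarrow> sim N N' \<Longrightarrow> N = N'"
proof -
  assume "N \<in> Gplus" "N' \<in> Gplus" and sim: "sim N N'"
  then obtain t t' where N: "N = Mt t" "0 \<le> t" and N': "N' = Mt t'" "0 \<le> t'"
    by (auto simp: Gplus_def)
  from sim_imp_norm_trace_eq[OF sim] have "cosh t = cosh t'"
    by (simp add: N N' Mt_eq_boost trace_boost)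
  with N N' show "N = N'" by simp
qed

theorem corollary4p2:
  shows "mexp ` us11 = Usp11 \<and>
         (\<forall>M \<in> mexp ` us11. \<exists>!N. N \<in> Gplus \<and> sim M N)"
proof (intro conjI ballI)
  show "mexp ` us11 = Usp11" by (rule mexp_us11_eq_Usp11)
next
  fix M assume "M \<in> mexp ` us11"
  then obtain b where M: "M = mexp (herm_offdiag b)"
    by (auto simp: us11_eq_range_herm_offdiag)
  let ?r = "cmod b"
  have "(cosh ?r)\<^sup>2 = 1 + (cmod (of_real (sinh ?r) * sgn b))\<^sup>2"
    by (simp add: norm_sinh_norm_mult_sgn cosh_square_eq)
  from sim_boost_norm[OF this] have "sim M (Mt ?r)"
    by (simp add: M mexp_herm_offdiag Mt_eq_boost norm_sinh_norm_mult_sgn)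
  moreover have "Mt ?r \<in> Gplus" by (simp add: Mt_in_Gplus)
  ultimately show "\<exists>!N. N \<in> Gplus \<and> sim M N"
    using Gplus_sim_eq unfolding sim_def by (meson equivclp_sym equivclp_trans)
qed

end
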